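(* In the cost setting and for the subroutine CSE described in the context, assume the event $G$ holds and the threshold satisfies $B\ge\mu^*$. Then CSE does not return Fail, and the optimal arm $i^*$ is never eliminated.
   Context: Delay-as-payoff bandit: $K$ arms, horizon $T$, maximum delay $D\in\mathbb{N}$. Arm $i$ has an unknown distribution $\mathcal{D}_i$ on $\{0,\dots,D\}$; at step $t$ the agent picks $i_t$ based on observed feedback, $d_t\sim\mathcal{D}_{i_t}$ is drawn independently and revealed only at time $t+d_t$; the cost is $c_t=d_t/D$ (to be minimized). Let $\mu(i)=\mathbb{E}_{X\sim\mathcal{D}_i}[X/D]$, $d(i)=D\mu(i)$, $\mu^*=\min_i\mu(i)$ attained at a unique arm $i^*$. Notation at time $t$: $n_t(i)$ is the number of steps $s\le t$ with $i_s=i$; $\hat\mu_t(i)=\frac{1}{n_t(i)}\sum_{s\le t,\,i_s=i}c_s$ (empirical mean of all plays, including not-yet-observed ones); $M_t(i)=\{s\le t: i_s=i,\ s+d_s\ge t\}$, $m_t(i)=|M_t(i)|$; $\mathcal{O}_t(i)=\{s\le t: i_s=i,\ s+d_s<t\}$; $F_t(i)=\{s\le t-D: i_s=i\}$; $a\vee b=\max\{a,b\}$; $S_t$ is the active set at time $t$. CSE with inputs $T$, $K$, $D$, threshold $B$: start with $t=1$, $S=[K]$. While $t<T$: play each arm of $S$ once (round robin), observe arriving feedback, set $t\leftarrow t+|S|$; for each $i\in S$ compute $\hat\mu^-_t(i)=\frac{1}{n_t(i)}\big(\sum_{s\in M_t(i)}\frac{t-s}{D}+\sum_{s\in\mathcal{O}_t(i)}c_s\big)$,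 $L^1_t(i)=\hat\mu^-_t(i)-\sqrt{2\log T/n_t(i)}$; $\hat\mu^F_t(i)=\frac{1}{|F_t(i)|\vee1}\sum_{s\in F_t(i)}c_s$, $L^2_t(i)=\hat\mu^F_t(i)-\sqrt{2\log T/(|F_t(i)|\vee1)}$; $L^3_t(i)=\frac{|S|}{D}\big(\frac{m_t(i)}{2}-8\log T-1\big)$; $LCB_t(i)=\max\{L^1_t(i),L^2_t(i),L^3_t(i)\}$, $UCB_t(i)=\hat\mu^F_t(i)+\sqrt{2\log T/(|F_t(i)|\vee1)}$. Then remove from $S$ every arm $i$ for which some $j\in S$ has $\min\{UCB_t(j),B\}<LCB_t(i)$; if $S=\emptyset$ return (Fail, $t$). If the loop ends return (Success, $t$). Event $G$: for every $t\in[T]$ and every arm $i\in[K]$, $m_t(i)\le\frac{2d(i)}{|S_t|}+16\log T+2$ and $|\mu(i)-\hat\mu_t(i)|\le\sqrt{2\log T/n_t(i)}$. *)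

theory Defs
  imports "HOL-Probability.Probability"
begin

text \<open>Arms are 1..K, times are 1,2,...  A history h maps a time s to Some i if arm i
  was played at time s (None otherwise).  The delay realisation is dl s i: the delay
  that arm i produces when played at time s (drawn from the arm distribution).\<close>

type_synonym hist = "nat \<Rightarrow> nat option"

definition mu :: "(nat \<Rightarrow> nat pmf) \<Rightarrow> nat \<Rightarrow> nat \<Rightarrow> real" where
  "mu Dist D i = measure_pmf.expectation (Dist i) (\<lambda>x. real x / real D)"

definition dmean :: "(nat \<Rightarrow> nat pmf) \<Rightarrow> nat \<Rightarrow> nat \<Rightarrow> real" where
  "dmean Dist D i = real D * mu Dist D i"

definition plays :: "hist \<Rightarrow> nat \<Rightarrow> nat \<Rightarrow> nat set" where
  "plays h t i = {s. s \<le> t \<and> h s = Some i}"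

definition ncnt :: "hist \<Rightarrow> nat \<Rightarrow> nat \<Rightarrow> nat" where
  "ncnt h t i = card (plays h t i)"

definition cost :: "(nat \<Rightarrow> nat \<Rightarrow> nat) \<Rightarrow> nat \<Rightarrow> hist \<Rightarrow> nat \<Rightarrow> real" where
  "cost dl D h s = real (dl s (the (h s))) / real D"

definition muhat :: "(nat \<Rightarrow> nat \<Rightarrow> nat) \<Rightarrow> nat \<Rightarrow> hist \<Rightarrow> nat \<Rightarrow> nat \<Rightarrow> real" where
  "muhat dl D h t i = (\<Sum>s\<in>plays h t i. cost dl D h s) / real (ncnt h t i)"

definition Mset :: "(nat \<Rightarrow> nat \<Rightarrow> nat) \<Rightarrow> hist \<Rightarrow> nat \<Rightarrow> nat \<Rightarrow> nat set" where
  "Mset dl h t i = {s \<in> plays h t i. t \<le> s + dl s i}"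

definition Oset :: "(nat \<Rightarrow> nat \<Rightarrow> nat) \<Rightarrow> hist \<Rightarrow> nat \<Rightarrow> nat \<Rightarrow> nat set" where
  "Oset dl h t i = {s \<in> plays h t i. s + dl s i < t}"

text \<open>F_t(i) = {s <= t - D : i_s = i}, with t - D read over the integers.\<close>
definition Fset :: "nat \<Rightarrow> hist \<Rightarrow> nat \<Rightarrow> nat \<Rightarrow> nat set" where
  "Fset D h t i = {s. s + D \<le> t \<and> h s = Some i}"

definition muminus :: "(nat \<Rightarrow> nat \<Rightarrow> nat) \<Rightarrow> nat \<Rightarrow> hist \<Rightarrow> nat \<Rightarrow> nat \<Rightarrow> real" where
  "muminus dl D h t i =
     ((\<Sum>s\<in>Mset dl h t i. real (t - s) / real D) + (\<Sum>s\<in>Oset dl h t i. cost dl D h s))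
       / real (ncnt h t i)"

definition L1 :: "nat \<Rightarrow> (nat \<Rightarrow> nat \<Rightarrow> nat) \<Rightarrow> nat \<Rightarrow> hist \<Rightarrow> nat \<Rightarrow> nat \<Rightarrow> real" where
  "L1 T dl D h t i = muminus dl D h t i - sqrt (2 * ln (real T) / real (ncnt h t i))"

definition muF :: "(nat \<Rightarrow> nat \<Rightarrow> nat) \<Rightarrow> nat \<Rightarrow> hist \<Rightarrow> nat \<Rightarrow> nat \<Rightarrow> real" where
  "muF dl D h t i = (\<Sum>s\<in>Fset D h t i. cost dl D h s) / real (max (card (Fset D h t i)) 1)"

definition L2 :: "nat \<Rightarrow> (nat \<Rightarrow> nat \<Rightarrow> nat) \<Rightarrow> nat \<Rightarrow> hist \<Rightarrow> nat \<Rightarrow> nat \<Rightarrow> real" where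
  "L2 T dl D h t i = muF dl D h t i
      - sqrt (2 * ln (real T) / real (max (card (Fset D h t i)) 1))"

definition L3 :: "nat \<Rightarrow> (nat \<Rightarrow> nat \<Rightarrow> nat) \<Rightarrow> nat \<Rightarrow> nat set \<Rightarrow> hist \<Rightarrow> nat \<Rightarrow> nat \<Rightarrow> real" where
  "L3 T dl D S h t i = real (card S) / real D
      * (real (card (Mset dl h t i)) / 2 - 8 * ln (real T) - 1)"

definition LCB :: "nat \<Rightarrow> (nat \<Rightarrow> nat \<Rightarrow> nat) \<Rightarrow> nat \<Rightarrow> nat set \<Rightarrow> hist \<Rightarrow> nat \<Rightarrow> nat \<Rightarrow> real" where
  "LCB T dl D S h t i = max (L1 T dl D h t i) (max (L2 T dl D h t i) (L3 T dl D S h t i))"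

definition UCB :: "nat \<Rightarrow> (nat \<Rightarrow> nat \<Rightarrow> nat) \<Rightarrow> nat \<Rightarrow> hist \<Rightarrow> nat \<Rightarrow> nat \<Rightarrow> real" where
  "UCB T dl D h t i = muF dl D h t i
      + sqrt (2 * ln (real T) / real (max (card (Fset D h t i)) 1))"

text \<open>State of CSE: (current time t, active set S, history, failed flag).
  When Fail is returned the flag is set and the (last nonempty) active set is kept.\<close>
type_synonym cse_st = "nat \<times> nat set \<times> hist \<times> bool"

definition st_time :: "cse_st \<Rightarrow> nat" where "st_time st = fst st"
definition st_set :: "cse_st \<Rightarrow> nat set" where "st_set st = fst (snd st)"
definition st_hist :: "cse_st \<Rightarrow> hist" where "st_hist st = fst (snd (snd st))"
definition st_failed :: "cse_st \<Rightarrow> bool" where "st_failed st = snd (snd (snd st))"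

definition cse_step ::
  "nat \<Rightarrow> nat \<Rightarrow> real \<Rightarrow> (nat \<Rightarrow> nat \<Rightarrow> nat) \<Rightarrow> (nat set \<Rightarrow> nat list) \<Rightarrow> cse_st \<Rightarrow> cse_st" where
  "cse_step T D B dl enum st =
     (let t = st_time st; S = st_set st; h = st_hist st; L = enum S;
          h' = (\<lambda>s. if t \<le> s \<and> s < t + card S \<and> s \<le> T then Some (L ! (s - t)) else h s);
          t' = t + card S;
          S' = {i \<in> S. \<not> (\<exists>j\<in>S. min (UCB T dl D h' t' j) B < LCB T dl D S h' t' i)}
      in if S' = {} then (t', S, h', True) else (t', S', h', False))"

primrec cse_state ::
  "nat \<Rightarrow> nat \<Rightarrow> nat \<Rightarrow> real \<Rightarrow> (nat \<Rightarrow> nat \<Rightarrow> nat) \<Rightarrow> (nat set \<Rightarrow> nat list) \<Rightarrow> nat \<Rightarrow> cse_st" where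
  "cse_state T K D B dl enum 0 = (1, {1..K}, (\<lambda>_. None), False)"
| "cse_state T K D B dl enum (Suc r) =
     (let st = cse_state T K D B dl enum r in
      if \<not> st_failed st \<and> st_time st < T then cse_step T D B dl enum st else st)"

text \<open>Active set S_t at time t: the set of the round during which time t is played;
  for times after termination, the last active set.\<close>
definition active_set ::
  "nat \<Rightarrow> nat \<Rightarrow> nat \<Rightarrow> real \<Rightarrow> (nat \<Rightarrow> nat \<Rightarrow> nat) \<Rightarrow> (nat set \<Rightarrow> nat list) \<Rightarrow> nat \<Rightarrow> nat set" where
  "active_set T K D B dl enum t =
     st_set (cse_state T K D B dl enum
       (LEAST r. st_failed (cse_state T K D B dl enum r)
               \<or> \<not> st_time (cse_state T K D B dl enum r) < T
               \<or> t < st_time (cse_state T K D B dl enum (Suc r))))"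

text \<open>The history of plays of the whole run (each time is played in at most one round).\<close>
definition run_hist ::
  "nat \<Rightarrow> nat \<Rightarrow> nat \<Rightarrow> real \<Rightarrow> (nat \<Rightarrow> nat \<Rightarrow> nat) \<Rightarrow> (nat set \<Rightarrow> nat list) \<Rightarrow> hist" where
  "run_hist T K D B dl enum s =
     (if \<exists>r. st_hist (cse_state T K D B dl enum r) s \<noteq> None
      then st_hist (cse_state T K D B dl enum
             (SOME r. st_hist (cse_state T K D B dl enum r) s \<noteq> None)) s
      else None)"

text \<open>Event G (the conditions with n_t(i) = 0 are vacuous: the confidence bound is
  only meaningful for arms that have been played).\<close>
definition event_G ::
  "(nat \<Rightarrow> nat pmf) \<Rightarrow> nat \<Rightarrow> nat \<Rightarrow> nat \<Rightarrow> real \<Rightarrow> (nat \<Rightarrow> nat \<Rightarrow> nat) \<Rightarrow> (nat set \<Rightarrow> nat list) \<Rightarrow> bool" where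
  "event_G Dist T K D B dl enum =
     (let h = run_hist T K D B dl enum in
      \<forall>t\<in>{1..T}. \<forall>i\<in>{1..K}.
        real (card (Mset dl h t i))
          \<le> 2 * dmean Dist D i / real (card (active_set T K D B dl enum t)) + 16 * ln (real T) + 2
        \<and> (ncnt h t i \<ge> 1 \<longrightarrow>
             \<bar>mu Dist D i - muhat dl D h t i\<bar> \<le> sqrt (2 * ln (real T) / real (ncnt h t i))))"

end

theory Submission
  imports Defs
begin

text \<open>Under G every lower confidence bound of the optimal arm i* is at most mu*, and the upper
  confidence bound of every active arm j is at least mu(j) >= mu*; as also B >= mu*, the elimination
  test never removes i*, so the active set never becomes empty. For L1, a pending play s is charged
  (t - s)/D, which does not exceed its true cost. For L2 and UCB, F_t(i) consists exactly of the plays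
  up to time t - D (times start at 1), so its empirical mean is one to which G applies. For L3, the
  plays pending at the end of a round were already pending at the last time of the round, where the
  active set is S, so G bounds their number by 2 d(i*)/|S| + 16 log T + 2, whence L3 <= d(i*)/D.\<close>

lemma mu_nonneg: "0 \<le> mu Dist D i"
  unfolding mu_def by (intro integral_nonneg_AE) simp

lemma mu_le_1:
  assumes "set_pmf (Dist i) \<subseteq> {0..D}" "D \<ge> 1"
  shows "mu Dist D i \<le> 1"
  unfolding mu_def
proof (rule measure_pmf.integral_le_const)
  show "integrable (measure_pmf (Dist i)) (\<lambda>x. real x / real D)"
    by (rule integrable_measure_pmf_finite) (use assms finite_subset in blast)
  show "AE x in measure_pmf (Dist i). real x / real D \<le> 1"
    using assms by (auto simp: AE_measure_pmf_iff)
qed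

lemma finite_plays: "finite (plays h t i)"
  by (rule finite_subset[of _ "{..t}"]) (auto simp: plays_def)

lemma plays_cong:
  assumes "\<And>s. s \<le> t \<Longrightarrow> h s = h' s"
  shows "plays h t i = plays h' t i"
  using assms by (auto simp: plays_def)

lemma muhat_cong:
  assumes "\<And>s. s \<le> t \<Longrightarrow> h s = h' s"
  shows "muhat dl D h t i = muhat dl D h' t i"
proof -
  have "(\<Sum>s\<in>plays h t i. cost dl D h s) = (\<Sum>s\<in>plays h' t i. cost dl D h' s)"
    unfolding plays_cong[OF assms] by (rule sum.cong) (auto simp: cost_def plays_def assms)
  then show ?thesis
    by (simp add: muhat_def ncnt_def plays_cong[OF assms])
qed

lemma plays_eq_if_idle:
  assumes "y \<le> t" and idle: "\<And>s. y < s \<Longrightarrow> s \<le> t \<Longrightarrow> h s = None"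
  shows "plays h t i = plays h y i"
  unfolding plays_def
proof (intro set_eqI iffI)
  fix s assume "s \<in> {s. s \<le> t \<and> h s = Some i}"
  then show "s \<in> {s. s \<le> y \<and> h s = Some i}" using idle[of s] by (cases "y < s") auto
qed (use assms(1) in auto)

lemma Fset_eq_plays:
  assumes "h 0 = None"
  shows "Fset D h t i = plays h (t - D) i"
proof -
  have "s + D \<le> t \<longleftrightarrow> s \<le> t - D" if "h s = Some i" for s
    using that assms by (cases s) auto
  then show ?thesis by (auto simp: Fset_def plays_def)
qed

lemma muminus_le_muhat: "muminus dl D h t i \<le> muhat dl D h t i"
proof -
  have part: "plays h t i = Mset dl h t i \<union> Oset dl h t i"
    "Mset dl h t i \<inter> Oset dl h t i = {}"
    by (auto simp: Mset_def Oset_def)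
  have fin: "finite (Mset dl h t i)" "finite (Oset dl h t i)"
    using finite_plays[of h t i] part(1) by auto
  have "(\<Sum>s\<in>Mset dl h t i. real (t - s) / real D) \<le> (\<Sum>s\<in>Mset dl h t i. cost dl D h s)"
  proof (rule sum_mono)
    fix s assume "s \<in> Mset dl h t i"
    then have "h s = Some i" "t \<le> s + dl s i" by (auto simp: Mset_def plays_def)
    then show "real (t - s) / real D \<le> cost dl D h s"
      by (auto simp: cost_def intro!: divide_right_mono)
  qed
  then have "(\<Sum>s\<in>Mset dl h t i. real (t - s) / real D) + (\<Sum>s\<in>Oset dl h t i. cost dl D h s)
      \<le> (\<Sum>s\<in>plays h t i. cost dl D h s)"
    unfolding part(1) using sum.union_disjoint[OF fin part(2), of "cost dl D h"] by simp
  then show ?thesis unfolding muminus_def muhat_def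
    by (intro divide_right_mono) auto
qed

lemma L1_le_mu:
  assumes "1 \<le> ncnt h t i \<Longrightarrow>
    \<bar>mu Dist D i - muhat dl D h t i\<bar> \<le> sqrt (2 * ln (real T) / real (ncnt h t i))"
  shows "L1 T dl D h t i \<le> mu Dist D i"
proof (cases "ncnt h t i = 0")
  case True
  then show ?thesis by (simp add: L1_def muminus_def mu_nonneg)
next
  case False
  then show ?thesis
    using assms muminus_le_muhat[of dl D h t i] unfolding L1_def by simp
qed

lemma muF_eq_muhat:
  assumes "h 0 = None"
  shows "muF dl D h t i = muhat dl D h (t - D) i"
    and "card (Fset D h t i) = ncnt h (t - D) i"
proof -
  have "card (plays h (t - D) i) = 0 \<Longrightarrow> plays h (t - D) i = {}"
    by (simp add: finite_plays)
  then show "muF dl D h t i = muhat dl D h (t - D) i"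
    using assms by (cases "card (plays h (t - D) i) = 0") (auto simp: muF_def muhat_def ncnt_def Fset_eq_plays)
  show "card (Fset D h t i) = ncnt h (t - D) i"
    using assms by (simp add: ncnt_def Fset_eq_plays)
qed

lemma L2_le_mu:
  assumes "h 0 = None"
    and "1 \<le> ncnt h (t - D) i \<Longrightarrow>
      \<bar>mu Dist D i - muhat dl D h (t - D) i\<bar> \<le> sqrt (2 * ln (real T) / real (ncnt h (t - D) i))"
  shows "L2 T dl D h t i \<le> mu Dist D i"
proof (cases "ncnt h (t - D) i = 0")
  case True
  have "0 \<le> ln (real T)" by (cases "T = 0") auto
  then have "0 \<le> sqrt (2 * ln (real T))" by simp
  moreover have "L2 T dl D h t i = - sqrt (2 * ln (real T))"
    using True assms(1) by (simp add: L2_def muF_eq_muhat muhat_def)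
  ultimately show ?thesis using mu_nonneg[of Dist D i] by linarith
next
  case False
  then have "max (card (Fset D h t i)) 1 = ncnt h (t - D) i"
    using assms(1) by (simp add: muF_eq_muhat)
  then show ?thesis using False assms unfolding L2_def by (simp add: muF_eq_muhat)
qed

lemma mu_le_UCB:
  assumes "h 0 = None" "2 \<le> T" "mu Dist D i \<le> 1"
    and "1 \<le> ncnt h (t - D) i \<Longrightarrow>
      \<bar>mu Dist D i - muhat dl D h (t - D) i\<bar> \<le> sqrt (2 * ln (real T) / real (ncnt h (t - D) i))"
  shows "mu Dist D i \<le> UCB T dl D h t i"
proof (cases "ncnt h (t - D) i = 0")
  case True
  have "ln 2 \<le> ln (real T)" using assms(2) by simp
  then have "1 / 2 \<le> ln (real T)" using ln2_ge_two_thirds by linarith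
  then have "1 \<le> sqrt (2 * ln (real T))" by simp
  moreover have "UCB T dl D h t i = sqrt (2 * ln (real T))"
    using True assms(1) by (simp add: UCB_def muF_eq_muhat muhat_def)
  ultimately show ?thesis using assms(3) by linarith
next
  case False
  then have "max (card (Fset D h t i)) 1 = ncnt h (t - D) i"
    using assms(1) by (simp add: muF_eq_muhat)
  then show ?thesis using False assms unfolding UCB_def by (simp add: muF_eq_muhat)
qed

lemma L3_le_mu:
  assumes "1 \<le> D" "0 < card S"
    and "real (card (Mset dl h t i)) \<le> 2 * dmean Dist D i / real (card S) + 16 * ln (real T) + 2"
  shows "L3 T dl D S h t i \<le> mu Dist D i"
proof -
  have "L3 T dl D S h t i \<le> real (card S) / real D * (dmean Dist D i / real (card S))"
    unfolding L3_def by (rule mult_left_mono) (use assms(3) in auto)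
  also have "\<dots> = mu Dist D i" using assms(1,2) by (simp add: dmean_def)
  finally show ?thesis .
qed

lemma optimal_LCB_le_min_UCB:
  assumes "h 0 = None" "1 \<le> D" "2 \<le> T" "0 < card S"
    and conc: "\<And>x i. i \<in> S \<Longrightarrow> 1 \<le> ncnt h x i \<Longrightarrow>
      \<bar>mu Dist D i - muhat dl D h x i\<bar> \<le> sqrt (2 * ln (real T) / real (ncnt h x i))"
    and pending: "real (card (Mset dl h t istar))
      \<le> 2 * dmean Dist D istar / real (card S) + 16 * ln (real T) + 2"
    and mu_le_1: "\<And>i. i \<in> S \<Longrightarrow> mu Dist D i \<le> 1"
    and opt: "istar \<in> S" "\<And>i. i \<in> S \<Longrightarrow> mu Dist D istar \<le> mu Dist D i"
    and "mu Dist D istar \<le> B" "j \<in> S"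
  shows "LCB T dl D S h t istar \<le> min (UCB T dl D h t j) B"
proof -
  have "LCB T dl D S h t istar \<le> mu Dist D istar"
    unfolding LCB_def
    using L1_le_mu[OF conc[OF opt(1)]] L2_le_mu[OF assms(1) conc[OF opt(1)]]
      L3_le_mu[OF assms(2,4) pending] by simp
  moreover have "mu Dist D j \<le> UCB T dl D h t j"
    using mu_le_UCB[OF assms(1,3) mu_le_1 conc] \<open>j \<in> S\<close> by blast
  ultimately show ?thesis using opt(2)[OF \<open>j \<in> S\<close>] \<open>mu Dist D istar \<le> B\<close> by linarith
qed

lemma cse_st_sel [simp]:
  "st_time (t, S, h, f) = t" "st_set (t, S, h, f) = S"
  "st_hist (t, S, h, f) = h" "st_failed (t, S, h, f) = f"
  by (simp_all add: st_time_def st_set_def st_hist_def st_failed_def)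

lemma cse_step_eq:
  "cse_step T D B dl enum (t, S, h, f) =
    (let h' = (\<lambda>s. if t \<le> s \<and> s < t + card S \<and> s \<le> T then Some (enum S ! (s - t)) else h s);
         t' = t + card S;
         S' = {i \<in> S. \<not> (\<exists>j\<in>S. min (UCB T dl D h' t' j) B < LCB T dl D S h' t' i)}
     in if S' = {} then (t', S, h', True) else (t', S', h', False))"
  unfolding cse_step_def st_time_def st_set_def st_hist_def fst_conv snd_conv Let_def ..

lemma st_time_cse_step: "st_time (cse_step T D B dl enum (t, S, h, f)) = t + card S"
  by (simp add: cse_step_eq Let_def st_time_def)

lemma st_hist_cse_step:
  "st_hist (cse_step T D B dl enum (t, S, h, f))
    = (\<lambda>s. if t \<le> s \<and> s < t + card S \<and> s \<le> T then Some (enum S ! (s - t)) else h s)"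
  by (simp add: cse_step_eq Let_def st_hist_def)

lemma st_set_cse_step:
  "st_set (cse_step T D B dl enum (t, S, h, f)) \<subseteq> S"
  "S \<noteq> {} \<Longrightarrow> st_set (cse_step T D B dl enum (t, S, h, f)) \<noteq> {}"
  by (auto simp: cse_step_eq Let_def)

lemma cse_step_keeps_arm:
  assumes "i \<in> S"
    and "\<forall>j\<in>S. LCB T dl D S (st_hist (cse_step T D B dl enum (t, S, h, f)))
            (st_time (cse_step T D B dl enum (t, S, h, f))) i
          \<le> min (UCB T dl D (st_hist (cse_step T D B dl enum (t, S, h, f)))
            (st_time (cse_step T D B dl enum (t, S, h, f))) j) B"
  shows "\<not> st_failed (cse_step T D B dl enum (t, S, h, f))
    \<and> i \<in> st_set (cse_step T D B dl enum (t, S, h, f))"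
proof -
  define h' where "h' = (\<lambda>s. if t \<le> s \<and> s < t + card S \<and> s \<le> T then Some (enum S ! (s - t)) else h s)"
  define S' where "S' = {i \<in> S. \<not> (\<exists>j\<in>S. min (UCB T dl D h' (t + card S) j) B < LCB T dl D S h' (t + card S) i)}"
  have step: "cse_step T D B dl enum (t, S, h, f)
      = (if S' = {} then (t + card S, S, h', True) else (t + card S, S', h', False))"
    unfolding cse_step_eq Let_def h'_def S'_def ..
  have "i \<in> S'"
    using assms unfolding S'_def h'_def by (auto simp: not_less st_time_cse_step st_hist_cse_step)
  then show ?thesis by (auto simp: step)
qed

context
  fixes T K D :: nat and B :: real and dl :: "nat \<Rightarrow> nat \<Rightarrow> nat"
    and enum :: "nat set \<Rightarrow> nat list"
begin

declare cse_state.simps(2) [simp del]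

abbreviation st :: "nat \<Rightarrow> cse_st" where
  "st r \<equiv> cse_state T K D B dl enum r"

lemma cse_state_Suc_step:
  "st r = (t, S, h, False) \<Longrightarrow> t < T \<Longrightarrow> st (Suc r) = cse_step T D B dl enum (t, S, h, False)"
  by (simp add: cse_state.simps(2))

lemma cse_state_Suc_cases:
  obtains (idle) "st (Suc r) = st r"
  | (step) t S h where "st r = (t, S, h, False)" "t < T" "st (Suc r) = cse_step T D B dl enum (t, S, h, False)"
proof -
  obtain t S h f where e: "st r = (t, S, h, f)" by (cases "st r") auto
  show thesis
  proof (cases "\<not> f \<and> t < T")
    case True
    then show thesis using that(2)[of t S h] e by (simp add: cse_state.simps(2))
  next
    case False
    then show thesis using that(1) e by (auto simp: cse_state.simps(2))
  qed
qed

lemma cse_state_invariant: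
  assumes "1 \<le> K"
  shows "1 \<le> st_time (st r) \<and> finite (st_set (st r)) \<and> st_set (st r) \<noteq> {}
    \<and> st_set (st r) \<subseteq> {1..K}
    \<and> (\<forall>s. st_hist (st r) s \<noteq> None \<longrightarrow> 1 \<le> s \<and> s < st_time (st r) \<and> s \<le> T)"
proof (induction r)
  case 0
  then show ?case using assms by simp
next
  case (Suc r)
  show ?case
  proof (cases rule: cse_state_Suc_cases[of r])
    case idle
    then show ?thesis using Suc by simp
  next
    case (step t S h)
    have IH: "1 \<le> t" "finite S" "S \<noteq> {}" "S \<subseteq> {1..K}"
      "\<And>s. h s \<noteq> None \<Longrightarrow> 1 \<le> s \<and> s < t \<and> s \<le> T"
      using Suc unfolding step(1) by auto
    have "0 < card S" using IH by (simp add: card_gt_0_iff)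
    moreover have "st_set (cse_step T D B dl enum (t, S, h, False)) \<subseteq> S"
      "st_set (cse_step T D B dl enum (t, S, h, False)) \<noteq> {}"
      by (simp_all add: st_set_cse_step IH(3))
    moreover have "\<forall>s. h s \<noteq> None \<longrightarrow> s < t + card S" using IH(5) by fastforce
    ultimately show ?thesis
      unfolding step(3) st_time_cse_step st_hist_cse_step
      using IH finite_subset[OF _ IH(2)] by auto
  qed
qed

lemma st_time_mono: "r \<le> r' \<Longrightarrow> st_time (st r) \<le> st_time (st r')"
proof (induction r' rule: dec_induct)
  case (step n)
  have "st_time (st n) \<le> st_time (st (Suc n))"
    by (cases rule: cse_state_Suc_cases[of n]) (simp_all add: st_time_cse_step)
  then show ?case using step(3) by linarith
qed simp

lemma st_hist_stable:
  assumes "r \<le> r'" "s < st_time (st r)"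
  shows "st_hist (st r') s = st_hist (st r) s"
  using assms(1)
proof (induction r' rule: dec_induct)
  case (step n)
  have "s < st_time (st n)" using st_time_mono[OF step(1)] assms(2) by simp
  then have "st_hist (st (Suc n)) s = st_hist (st n) s"
    by (cases rule: cse_state_Suc_cases[of n]) (simp_all add: st_hist_cse_step)
  then show ?case using step(3) by simp
qed simp

lemma st_failed_mono: "r \<le> r' \<Longrightarrow> st_failed (st r) \<Longrightarrow> st_failed (st r')"
  by (induction r' rule: dec_induct) (auto simp: cse_state.simps(2) Let_def)

lemma run_hist_eq_st_hist:
  assumes "1 \<le> K" "s < st_time (st r)"
  shows "run_hist T K D B dl enum s = st_hist (st r) s"
proof -
  have agree: "st_hist (st r') s = st_hist (st r) s" if "st_hist (st r') s \<noteq> None" for r'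
  proof (cases "r \<le> r'")
    case True
    then show ?thesis using st_hist_stable assms(2) by blast
  next
    case False
    have "s < st_time (st r')" using that cse_state_invariant[OF assms(1)] by blast
    then show ?thesis using st_hist_stable[of r' r s] False by simp
  qed
  show ?thesis
  proof (cases "\<exists>r'. st_hist (st r') s \<noteq> None")
    case True
    then have "st_hist (st (SOME r'. st_hist (st r') s \<noteq> None)) s \<noteq> None" by (rule someI_ex)
    then show ?thesis unfolding run_hist_def using True agree by simp
  next
    case False
    then show ?thesis unfolding run_hist_def by simp
  qed
qed

lemma active_set_in_round:
  assumes "st r = (t, S, h, False)" "t < T" "t \<le> \<tau>" "\<tau> < st_time (st (Suc r))"
  shows "active_set T K D B dl enum \<tau> = S"
proof -
  have "(LEAST y. st_failed (st y) \<or> \<not> st_time (st y) < T \<or> \<tau> < st_time (st (Suc y))) = r"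
  proof (rule Least_equality)
    show "st_failed (st r) \<or> \<not> st_time (st r) < T \<or> \<tau> < st_time (st (Suc r))"
      using assms(4) by simp
  next
    fix y assume y: "st_failed (st y) \<or> \<not> st_time (st y) < T \<or> \<tau> < st_time (st (Suc y))"
    show "r \<le> y"
    proof (rule ccontr)
      assume "\<not> r \<le> y"
      then have "\<not> st_failed (st y)" "st_time (st y) \<le> t" "st_time (st (Suc y)) \<le> t"
        using st_failed_mono[of y r] st_time_mono[of y r] st_time_mono[of "Suc y" r] assms(1)
        by auto
      then show False using y assms(2,3) by linarith
    qed
  qed
  then show ?thesis unfolding active_set_def using assms(1) by simp
qed

lemma plays_st_hist_truncate:
  assumes "1 \<le> K"
  shows "plays (st_hist (st r)) x i = plays (st_hist (st r)) (min x (min T (st_time (st r) - 1))) i"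
proof (rule plays_eq_if_idle)
  fix s assume s: "min x (min T (st_time (st r) - 1)) < s" "s \<le> x"
  show "st_hist (st r) s = None"
  proof (rule ccontr)
    assume "st_hist (st r) s \<noteq> None"
    then have "s \<le> T" "s < st_time (st r)" using cse_state_invariant[OF assms] by blast+
    then show False using s by linarith
  qed
qed simp

lemma event_GD:
  assumes "event_G Dist T K D B dl enum" "x \<in> {1..T}" "i \<in> {1..K}"
  shows "real (card (Mset dl (run_hist T K D B dl enum) x i))
      \<le> 2 * dmean Dist D i / real (card (active_set T K D B dl enum x)) + 16 * ln (real T) + 2"
    and "1 \<le> ncnt (run_hist T K D B dl enum) x i \<Longrightarrow>
      \<bar>mu Dist D i - muhat dl D (run_hist T K D B dl enum) x i\<bar>
        \<le> sqrt (2 * ln (real T) / real (ncnt (run_hist T K D B dl enum) x i))"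
  using assms unfolding event_G_def Let_def by blast+

lemma event_G_concentration:
  assumes "1 \<le> K" "event_G Dist T K D B dl enum" "i \<in> {1..K}"
    and "1 \<le> ncnt (st_hist (st r)) x i"
  shows "\<bar>mu Dist D i - muhat dl D (st_hist (st r)) x i\<bar>
    \<le> sqrt (2 * ln (real T) / real (ncnt (st_hist (st r)) x i))"
proof -
  let ?h = "st_hist (st r)" and ?t = "st_time (st r)" and ?R = "run_hist T K D B dl enum"
  \<comment> \<open>G speaks about the history of the whole run, which agrees with ?h before ?t;
    all plays of ?h up to x happen by time y, which lies in [1, T] and before ?t.\<close>
  have played: "1 \<le> s \<and> s < ?t \<and> s \<le> T" if "?h s \<noteq> None" for s
    using cse_state_invariant[OF assms(1)] that by blast
  define y where "y = min x (min T (?t - 1))"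
  have "plays ?h x i = plays ?h y i"
    unfolding y_def by (rule plays_st_hist_truncate[OF assms(1)])
  then have same: "ncnt ?h x i = ncnt ?h y i" "muhat dl D ?h x i = muhat dl D ?h y i"
    by (simp_all add: ncnt_def muhat_def)
  have "plays ?h y i \<noteq> {}" using assms(4) same(1) by (auto simp: ncnt_def)
  then obtain s where "s \<in> plays ?h y i" by blast
  then have y: "y \<in> {1..T}" "y < ?t"
    using played[of s] by (auto simp: plays_def y_def)
  have R: "?R s = ?h s" if "s \<le> y" for s
    using run_hist_eq_st_hist[OF assms(1), of s r] that y(2) by simp
  have "ncnt ?R y i = ncnt ?h y i" "muhat dl D ?R y i = muhat dl D ?h y i"
    using plays_cong[OF R] muhat_cong[OF R] by (simp_all add: ncnt_def)
  then show ?thesis using event_GD(2)[OF assms(2) y(1) assms(3)] assms(4) same by simp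
qed

lemma event_G_pending_bound:
  assumes "1 \<le> K" "event_G Dist T K D B dl enum" "i \<in> {1..K}"
    and "st r = (t, S, h, False)" "t < T"
  shows "real (card (Mset dl (st_hist (st (Suc r))) (st_time (st (Suc r))) i))
    \<le> 2 * dmean Dist D i / real (card S) + 16 * ln (real T) + 2"
proof -
  let ?h = "st_hist (st (Suc r))" and ?t = "st_time (st (Suc r))"
    and ?R = "run_hist T K D B dl enum"
  have "1 \<le> t" "S \<noteq> {}" "finite S"
    using cse_state_invariant[OF assms(1), of r] assms(4) by auto
  moreover have "?t = t + card S"
    using cse_state_Suc_step[OF assms(4,5)] by (simp add: st_time_cse_step)
  ultimately have t': "t < ?t" by (simp add: card_gt_0_iff)
  \<comment> \<open>\<tau> is the last time played in the round.\<close>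
  define \<tau> where "\<tau> = min (?t - 1) T"
  have \<tau>: "t \<le> \<tau>" "\<tau> < ?t" "\<tau> \<in> {1..T}"
    using t' assms(5) \<open>1 \<le> t\<close> unfolding \<tau>_def by auto
  have "plays ?h ?t i = plays ?h \<tau> i"
    using plays_st_hist_truncate[OF assms(1), of "Suc r" ?t i] unfolding \<tau>_def
    by (simp add: min.commute)
  then have "Mset dl ?h ?t i \<subseteq> Mset dl ?h \<tau> i"
    using \<tau>(2) by (auto simp: Mset_def)
  also have "\<dots> = Mset dl ?R \<tau> i"
  proof -
    have "?h s = ?R s" if "s \<le> \<tau>" for s
      using run_hist_eq_st_hist[OF assms(1), of s "Suc r"] that \<tau>(2) by simp
    then show ?thesis using plays_cong[of \<tau> ?h ?R] by (simp add: Mset_def)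
  qed
  finally have "real (card (Mset dl ?h ?t i)) \<le> real (card (Mset dl ?R \<tau> i))"
    by (intro of_nat_mono card_mono finite_subset[OF _ finite_plays]) (auto simp: Mset_def)
  also have "\<dots> \<le> 2 * dmean Dist D i / real (card (active_set T K D B dl enum \<tau>)) + 16 * ln (real T) + 2"
    by (rule event_GD(1)[OF assms(2) \<tau>(3) assms(3)])
  also have "active_set T K D B dl enum \<tau> = S"
    by (rule active_set_in_round[OF assms(4,5) \<tau>(1,2)])
  finally show ?thesis .
qed

lemma optimal_arm_survives_round:
  fixes Dist :: "nat \<Rightarrow> nat pmf" and istar :: nat
  assumes "1 \<le> K" "1 \<le> D"
    and supp: "\<And>i. i \<in> {1..K} \<Longrightarrow> set_pmf (Dist i) \<subseteq> {0..D}"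
    and opt: "istar \<in> {1..K}" "\<And>i. i \<in> {1..K} \<Longrightarrow> i \<noteq> istar \<Longrightarrow> mu Dist D istar < mu Dist D i"
    and G: "event_G Dist T K D B dl enum"
    and B: "B \<ge> mu Dist D istar"
    and alive: "\<not> st_failed (st r)" "istar \<in> st_set (st r)"
  shows "\<not> st_failed (st (Suc r)) \<and> istar \<in> st_set (st (Suc r))"
proof (cases rule: cse_state_Suc_cases[of r])
  case idle
  then show ?thesis using alive by simp
next
  case (step t S h)
  let ?h = "st_hist (st (Suc r))" and ?t = "st_time (st (Suc r))"
  have S: "S \<subseteq> {1..K}" "0 < card S" "istar \<in> S"
    using cse_state_invariant[OF assms(1), of r] alive(2) step(1) by (auto simp: card_gt_0_iff)
  have "1 \<le> t" using cse_state_invariant[OF assms(1), of r] step(1) by simp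
  then have "2 \<le> T" using step(2) by simp
  have "?h 0 = None" using cse_state_invariant[OF assms(1), of "Suc r"] by auto
  have "\<forall>j\<in>S. LCB T dl D S ?h ?t istar \<le> min (UCB T dl D ?h ?t j) B"
  proof
    fix j assume "j \<in> S"
    show "LCB T dl D S ?h ?t istar \<le> min (UCB T dl D ?h ?t j) B"
    proof (rule optimal_LCB_le_min_UCB[where h = ?h])
      show "\<bar>mu Dist D i - muhat dl D ?h x i\<bar> \<le> sqrt (2 * ln (real T) / real (ncnt ?h x i))"
        if "i \<in> S" "1 \<le> ncnt ?h x i" for x i
        using event_G_concentration[OF assms(1) G] S(1) that by blast
      show "real (card (Mset dl ?h ?t istar))
          \<le> 2 * dmean Dist D istar / real (card S) + 16 * ln (real T) + 2"
        by (rule event_G_pending_bound[OF assms(1) G opt(1) step(1,2)])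
      show "mu Dist D i \<le> 1" if "i \<in> S" for i
        using mu_le_1[of Dist i D] supp[of i] assms(2) S(1) that by blast
      show "mu Dist D istar \<le> mu Dist D i" if "i \<in> S" for i
        using opt(2)[of i] S(1) that by fastforce
    qed (use \<open>?h 0 = None\<close> assms(2) \<open>2 \<le> T\<close> S(2,3) B \<open>j \<in> S\<close> in auto)
  qed
  then show ?thesis
    unfolding step(3) by (rule cse_step_keeps_arm[OF S(3)])
qed

end

theorem lemma3:
  fixes Dist :: "nat \<Rightarrow> nat pmf" and T K D :: nat and B :: real
    and dl :: "nat \<Rightarrow> nat \<Rightarrow> nat" and enum :: "nat set \<Rightarrow> nat list" and istar :: nat
  assumes "K \<ge> 1" and "D \<ge> 1"
    and supp: "\<And>i. i \<in> {1..K} \<Longrightarrow> set_pmf (Dist i) \<subseteq> {0..D}"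
    and real: "\<And>s i. i \<in> {1..K} \<Longrightarrow> dl s i \<in> set_pmf (Dist i)"
    and enum: "\<And>S. finite S \<Longrightarrow> distinct (enum S) \<and> set (enum S) = S"
    and opt: "istar \<in> {1..K}" "\<And>i. i \<in> {1..K} \<Longrightarrow> i \<noteq> istar \<Longrightarrow> mu Dist D istar < mu Dist D i"
    and G: "event_G Dist T K D B dl enum"
    and B: "B \<ge> mu Dist D istar"
  shows "\<forall>r. \<not> st_failed (cse_state T K D B dl enum r)
            \<and> istar \<in> st_set (cse_state T K D B dl enum r)"
proof
  fix r
  show "\<not> st_failed (cse_state T K D B dl enum r) \<and> istar \<in> st_set (cse_state T K D B dl enum r)"
  proof (induction r)
    case 0
    then show ?case using opt(1) by simp
  next
    case (Suc r)
    then show ?case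
      using optimal_arm_survives_round[OF assms(1,2) supp opt G B] by blast
  qed
qed

end
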